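(* For every backward trie $\mathsf{T}_b$ with $n$ nodes, over any alphabet, $\mathsf{DAWG}(\mathsf{T}_b)$ has $O(n^2)$ nodes and $O(n^2)$ edges. Moreover, there exist backward tries $\mathsf{T}_b$ with $n$ nodes, for arbitrarily large $n$ and over an alphabet of constant size, such that $\mathsf{DAWG}(\mathsf{T}_b)$ has $\Omega(n^2)$ nodes and $\Omega(n^2)$ edges.
   Context: An alphabet $\Sigma$ is a finite ordered set of characters. A forward trie $\mathsf{T}_f$ is a rooted tree with $n$ nodes in which every edge is directed from parent to child and labeled by a single character of $\Sigma$, such that the edges leaving any node carry pairwise distinct labels. The backward trie $\mathsf{T}_b$ is obtained from $\mathsf{T}_f$ by reversing the direction of every edge while keeping its label; it has the same nodes and root $r$. For nodes $u,v$ with $u$ an ancestor of $v$ (possibly $u=v$), $\mathrm{str}_b(v,u)$ is the string of labels read along the reversed (upward) path from $v$ to $u$. Define $\mathrm{Substr}(\mathsf{T}_b)=\{\mathrm{str}_b(v,u): u \text{ an ancestor of } v\}$. A string $Y\in\mathrm{Substr}(\mathsf{T}_b)$ is left-maximal on $\mathsf{T}_b$ if either there are distinct characters $a\ne b$ with $aY,bY\in\mathrm{Substr}(\mathsf{T}_b)$, or $Y=\mathrm{str}_b(\ell,u)$ for some leaf $\ell$ and some ancestor $u$ of $\ell$. For $Y\in\mathrm{Substr}(\mathsf{T}_b)$ let $\mathrm{lmx}_b(Y)$ be the shortest left-maximal string on $\mathsf{T}_b$ of the form $\gamma Y$ with $\gamma\in\Sigma^*$. Two substrings $Y,Y'$ are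 equivalent iff $\mathrm{lmx}_b(Y)=\mathrm{lmx}_b(Y')$; let $[Y]$ denote the class of $Y$. $\mathsf{DAWG}(\mathsf{T}_b)$ is the deterministic edge-labeled directed graph whose nodes are the classes $[Y]$, $Y\in\mathrm{Substr}(\mathsf{T}_b)$, with an edge labeled $a\in\Sigma$ from $[Y]$ to $[Ya]$ whenever $Y,Ya\in\mathrm{Substr}(\mathsf{T}_b)$. *)

theory Defs
  imports Complex_Main
begin

text \<open>A (forward) trie over the alphabet of character codes nat is represented
  by the set of its nodes, each node identified with the label string of the path
  from the root to it.  Such a set is finite, contains the root [] and is
  prefix-closed; conversely every trie arises this way (siblings carry distinct
  labels).  A node u is an ancestor of v iff
  v = u @ x, and then str_b(v,u) = rev x.\<close>

definition trie :: "nat list set \<Rightarrow> bool" where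
  "trie T \<longleftrightarrow> finite T \<and> [] \<in> T \<and> (\<forall>w a. w @ [a] \<in> T \<longrightarrow> w \<in> T)"

definition Substr_b :: "nat list set \<Rightarrow> nat list set" where
  "Substr_b T = {rev x | u x. u @ x \<in> T}"

definition is_leaf :: "nat list set \<Rightarrow> nat list \<Rightarrow> bool" where
  "is_leaf T l \<longleftrightarrow> l \<in> T \<and> (\<forall>a. l @ [a] \<notin> T)"

definition left_maximal_b :: "nat list set \<Rightarrow> nat list \<Rightarrow> bool" where
  "left_maximal_b T Y \<longleftrightarrow> Y \<in> Substr_b T \<and>
     ((\<exists>a b. a \<noteq> b \<and> a # Y \<in> Substr_b T \<and> b # Y \<in> Substr_b T) \<or>
      (\<exists>l u x. is_leaf T l \<and> l = u @ x \<and> Y = rev x))"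

definition lmx_b :: "nat list set \<Rightarrow> nat list \<Rightarrow> nat list" where
  "lmx_b T Y = arg_min length (\<lambda>Z. left_maximal_b T Z \<and> (\<exists>g. Z = g @ Y))"

definition eq_class_b :: "nat list set \<Rightarrow> nat list \<Rightarrow> nat list set" where
  "eq_class_b T Y = {Y' \<in> Substr_b T. lmx_b T Y' = lmx_b T Y}"

definition dawg_nodes :: "nat list set \<Rightarrow> nat list set set" where
  "dawg_nodes T = eq_class_b T ` Substr_b T"

definition dawg_edges :: "nat list set \<Rightarrow> (nat list set \<times> nat \<times> nat list set) set" where
  "dawg_edges T = {(eq_class_b T Y, a, eq_class_b T (Y @ [a])) | Y a.
                     Y \<in> Substr_b T \<and> Y @ [a] \<in> Substr_b T}"

end

theory Submission
  imports Defs "HOL-Library.Sublist"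
begin

text \<open>Upper bound: a DAWG node is the class of some substring, and an edge \<open>[Y] \<rightarrow> [Ya]\<close> is
  determined by the substring \<open>Ya\<close>.  In a trie with \<open>n\<close> nodes every node has depth \<open>< n\<close>, so
  each node is the lower end of at most \<open>n\<close> upward paths and there are at most \<open>n\<^sup>2\<close> substrings.

  Lower bound: take the path \<open>0\<^sup>k1\<^sup>k\<close> and hang a leaf labelled \<open>2\<close> below each node
  \<open>0\<^sup>k1\<^sup>i\<close>.  This trie has \<open>\<Theta>(k)\<close> nodes, and each of the \<open>(k+1)\<^sup>2\<close> strings
  \<open>2 1\<^sup>i 0\<^sup>j\<close> (read upward from a leaf) is left-maximal because it starts at a leaf.  A left-maximal
  string is its own \<open>lmx\<^sub>b\<close>, so these strings lie in pairwise distinct classes and are the targets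
  of pairwise distinct edges.\<close>

lemma count_list_replicate: "count_list (replicate n x) y = (if x = y then n else 0)"
  by (induction n) auto

lemma trie_prefix_closed:
  assumes "trie T" "w \<in> T" "prefix v w"
  shows "v \<in> T"
proof -
  obtain r where "w = v @ r" using assms(3) prefixE by blast
  have "v @ r \<in> T \<Longrightarrow> v \<in> T"
  proof (induction r rule: rev_induct)
    case (snoc a r)
    then show ?case using assms(1) unfolding trie_def by (metis append_assoc)
  qed simp
  then show ?thesis using assms(2) \<open>w = v @ r\<close> by blast
qed

lemma length_less_card_trie:
  assumes "trie T" "w \<in> T"
  shows "length w < card T"
proof -
  have "set (prefixes w) \<subseteq> T" using trie_prefix_closed[OF assms] by auto
  then have "card (set (prefixes w)) \<le> card T"
    using assms(1) by (intro card_mono) (simp_all add: trie_def)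
  then show ?thesis by simp
qed

section \<open>Upper bound\<close>

lemma Substr_b_eq_UN_suffixes: "Substr_b T = (\<Union>w\<in>T. rev ` set (suffixes w))"
  by (auto simp: Substr_b_def suffix_def)

lemma finite_Substr_b: "trie T \<Longrightarrow> finite (Substr_b T)"
  by (simp add: Substr_b_eq_UN_suffixes trie_def)

lemma card_Substr_b_le:
  assumes "trie T"
  shows "card (Substr_b T) \<le> card T ^ 2"
proof -
  have "card (Substr_b T) \<le> (\<Sum>w\<in>T. card (rev ` set (suffixes w)))"
    unfolding Substr_b_eq_UN_suffixes using assms by (intro card_UN_le) (simp add: trie_def)
  also have "\<dots> \<le> (\<Sum>w\<in>T. card T)"
  proof (rule sum_mono)
    fix w assume "w \<in> T"
    have "card (rev ` set (suffixes w)) \<le> Suc (length w)"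
      using card_image_le[of "set (suffixes w)" rev] by simp
    then show "card (rev ` set (suffixes w)) \<le> card T"
      using length_less_card_trie[OF assms \<open>w \<in> T\<close>] by simp
  qed
  also have "\<dots> = card T ^ 2" by (simp add: power2_eq_square)
  finally show ?thesis .
qed

definition dawg_edge_of :: "nat list set \<Rightarrow> nat list \<Rightarrow> nat list set \<times> nat \<times> nat list set" where
  "dawg_edge_of T Z = (eq_class_b T (butlast Z), last Z, eq_class_b T Z)"

lemma dawg_edges_subset_image: "dawg_edges T \<subseteq> dawg_edge_of T ` Substr_b T"
  unfolding dawg_edges_def dawg_edge_of_def by (auto intro!: image_eqI)

lemma butlast_in_Substr_b: "Z \<in> Substr_b T \<Longrightarrow> butlast Z \<in> Substr_b T"
proof -
  assume "Z \<in> Substr_b T"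
  then obtain u x where "Z = rev x" "u @ x \<in> T" unfolding Substr_b_def by blast
  show ?thesis
  proof (cases x)
    case Nil
    then show ?thesis using \<open>Z \<in> Substr_b T\<close> \<open>Z = rev x\<close> by simp
  next
    case (Cons a x')
    then have "(u @ [a]) @ x' \<in> T" "butlast Z = rev x'"
      using \<open>Z = rev x\<close> \<open>u @ x \<in> T\<close> by simp_all
    then show ?thesis unfolding Substr_b_def by blast
  qed
qed

lemma dawg_edge_of_in_dawg_edges:
  assumes "Z \<in> Substr_b T" "Z \<noteq> []"
  shows "dawg_edge_of T Z \<in> dawg_edges T"
proof -
  obtain Y a where Z: "Z = Y @ [a]" using assms(2) rev_exhaust by blast
  have "Y \<in> Substr_b T" using butlast_in_Substr_b[OF assms(1)] Z by simp
  then show ?thesis using assms(1) Z unfolding dawg_edges_def dawg_edge_of_def by auto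
qed

lemma card_dawg_nodes_le_Substr_b:
  "trie T \<Longrightarrow> card (dawg_nodes T) \<le> card (Substr_b T)"
  unfolding dawg_nodes_def by (rule card_image_le) (rule finite_Substr_b)

lemma card_dawg_edges_le_Substr_b:
  assumes "trie T"
  shows "card (dawg_edges T) \<le> card (Substr_b T)"
proof -
  have "finite (dawg_edge_of T ` Substr_b T)" using finite_Substr_b[OF assms] by simp
  then have "card (dawg_edges T) \<le> card (dawg_edge_of T ` Substr_b T)"
    using dawg_edges_subset_image by (rule card_mono)
  also have "\<dots> \<le> card (Substr_b T)" by (rule card_image_le[OF finite_Substr_b[OF assms]])
  finally show ?thesis .
qed

section \<open>Left-maximal strings give distinct nodes and edges\<close>

lemma lmx_b_left_maximal:
  assumes "left_maximal_b T Y"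
  shows "lmx_b T Y = Y"
proof -
  let ?P = "\<lambda>Z. left_maximal_b T Z \<and> (\<exists>g. Z = g @ Y)"
  have "?P Y" using assms by auto
  then have "?P (lmx_b T Y)" and "length (lmx_b T Y) \<le> length Y"
    unfolding lmx_b_def using arg_min_nat_lemma[of ?P Y length] by blast+
  then show ?thesis by auto
qed

lemma inj_on_eq_class_b_left_maximal: "inj_on (eq_class_b T) {Y. left_maximal_b T Y}"
proof (rule inj_onI)
  fix Y Y' assume Y: "Y \<in> {Y. left_maximal_b T Y}" and Y': "Y' \<in> {Y. left_maximal_b T Y}"
    and eq: "eq_class_b T Y = eq_class_b T Y'"
  have "Y \<in> eq_class_b T Y" using Y unfolding eq_class_b_def left_maximal_b_def by auto
  then have "lmx_b T Y = lmx_b T Y'" using eq unfolding eq_class_b_def by auto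
  then show "Y = Y'" using Y Y' by (simp add: lmx_b_left_maximal)
qed

lemma card_left_maximal_le_dawg_nodes:
  assumes "trie T" "L \<subseteq> {Y. left_maximal_b T Y}"
  shows "card L \<le> card (dawg_nodes T)"
proof -
  have "card L = card (eq_class_b T ` L)"
    using inj_on_subset[OF inj_on_eq_class_b_left_maximal assms(2)] by (simp add: card_image)
  also have "\<dots> \<le> card (dawg_nodes T)"
    unfolding dawg_nodes_def using assms finite_Substr_b
    by (intro card_mono image_mono) (auto simp: left_maximal_b_def)
  finally show ?thesis .
qed

lemma card_left_maximal_le_dawg_edges:
  assumes "trie T" "L \<subseteq> {Y. left_maximal_b T Y}" "[] \<notin> L"
  shows "card L \<le> card (dawg_edges T)"
proof -
  have L_Substr: "L \<subseteq> Substr_b T" using assms(2) by (auto simp: left_maximal_b_def)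
  have "inj_on (dawg_edge_of T) L"
    using inj_on_subset[OF inj_on_eq_class_b_left_maximal assms(2)]
    unfolding dawg_edge_of_def inj_on_def by simp
  then have "card L = card (dawg_edge_of T ` L)" by (simp add: card_image)
  also have "\<dots> \<le> card (dawg_edges T)"
  proof (rule card_mono)
    show "finite (dawg_edges T)"
      by (rule finite_surj[OF finite_Substr_b[OF assms(1)] dawg_edges_subset_image])
    show "dawg_edge_of T ` L \<subseteq> dawg_edges T"
      using L_Substr assms(3) dawg_edge_of_in_dawg_edges by blast
  qed
  finally show ?thesis .
qed

lemma left_maximal_b_leaf_suffix: "is_leaf T (u @ x) \<Longrightarrow> left_maximal_b T (rev x)"
  unfolding left_maximal_b_def is_leaf_def Substr_b_def by blast

definition prefix_closure :: "'a list set \<Rightarrow> 'a list set" where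
  "prefix_closure W = {v. \<exists>w\<in>W. prefix v w}"

lemma trie_prefix_closure:
  assumes "finite W" "W \<noteq> {}"
  shows "trie (prefix_closure W)"
proof -
  have "prefix_closure W = (\<Union>w\<in>W. set (prefixes w))"
    by (auto simp: prefix_closure_def)
  then have "finite (prefix_closure W)" using assms(1) by simp
  moreover have "[] \<in> prefix_closure W" using assms(2) by (auto simp: prefix_closure_def)
  moreover have "w \<in> prefix_closure W" if "w @ [a] \<in> prefix_closure W" for w a
    using that prefix_order.order_trans[of w "w @ [a]"] by (auto simp: prefix_closure_def)
  ultimately show ?thesis unfolding trie_def by blast
qed

lemma is_leaf_prefix_closure:
  assumes "l \<in> W" "\<And>w. w \<in> W \<Longrightarrow> \<not> strict_prefix l w"
  shows "is_leaf (prefix_closure W) l"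
  unfolding is_leaf_def
proof (intro conjI allI notI)
  show "l \<in> prefix_closure W"
    using assms(1) prefix_order.refl unfolding prefix_closure_def by blast
  fix a assume "l @ [a] \<in> prefix_closure W"
  then obtain w where "w \<in> W" "prefix (l @ [a]) w" unfolding prefix_closure_def by blast
  then show False using assms(2) prefix_snocD by metis
qed

section \<open>The lower-bound family\<close>

definition comb_leaf :: "nat \<Rightarrow> nat \<Rightarrow> nat list" where
  "comb_leaf k i = replicate k 0 @ replicate i 1 @ [2]"

definition comb_trie :: "nat \<Rightarrow> nat list set" where
  "comb_trie k = prefix_closure (comb_leaf k ` {..k})"

lemma trie_comb_trie: "trie (comb_trie k)"
  unfolding comb_trie_def by (rule trie_prefix_closure) auto

lemma comb_trie_alphabet: "w \<in> comb_trie k \<Longrightarrow> set w \<subseteq> {0, 1, 2}"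
  unfolding comb_trie_def prefix_closure_def comb_leaf_def by (fastforce dest: set_mono_prefix)

lemma comb_trie_subset:
  "comb_trie k \<subseteq> set (prefixes (replicate k 0 @ replicate k 1)) \<union> comb_leaf k ` {..k}"
proof
  fix v assume "v \<in> comb_trie k"
  then obtain i where "i \<le> k" "prefix v (comb_leaf k i)"
    unfolding comb_trie_def prefix_closure_def by blast
  then have v_cases: "v = comb_leaf k i \<or> prefix v (replicate k 0 @ replicate i 1)"
    unfolding comb_leaf_def by (metis append_assoc prefix_snoc)
  have "replicate k 0 @ replicate k 1 = (replicate k 0 @ replicate i 1) @ replicate (k - i) (1::nat)"
    using \<open>i \<le> k\<close> replicate_add[of i "k - i" "1::nat"] by simp
  then have spine: "prefix (replicate k 0 @ replicate i 1) (replicate k (0::nat) @ replicate k 1)"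
    by (rule prefixI)
  show "v \<in> set (prefixes (replicate k 0 @ replicate k 1)) \<union> comb_leaf k ` {..k}"
  proof (cases "v = comb_leaf k i")
    case True
    then show ?thesis using \<open>i \<le> k\<close> by simp
  next
    case False
    then have "prefix v (replicate k 0 @ replicate k 1)"
      using v_cases prefix_order.order_trans[OF _ spine] by blast
    then show ?thesis by simp
  qed
qed

lemma card_comb_trie_le: "card (comb_trie k) \<le> 3 * (k + 1)"
proof -
  have "card (comb_trie k)
      \<le> card (set (prefixes (replicate k (0::nat) @ replicate k 1)) \<union> comb_leaf k ` {..k})"
    by (rule card_mono[OF _ comb_trie_subset]) simp
  also have "\<dots> \<le> card (set (prefixes (replicate k (0::nat) @ replicate k 1))) + card (comb_leaf k ` {..k})"
    by (rule card_Un_le)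
  also have "\<dots> \<le> (2 * k + 1) + (k + 1)"
    using card_image_le[of "{..k}" "comb_leaf k"] by simp
  finally show ?thesis by simp
qed

lemma card_comb_trie_ge: "k + 1 \<le> card (comb_trie k)"
proof -
  have "inj_on (comb_leaf k) {..k}" by (rule inj_onI) (simp add: comb_leaf_def)
  then have "card (comb_leaf k ` {..k}) = k + 1" by (simp add: card_image)
  moreover have "comb_leaf k ` {..k} \<subseteq> comb_trie k"
    unfolding comb_trie_def prefix_closure_def by auto
  ultimately show ?thesis
    using card_mono[OF _ \<open>comb_leaf k ` {..k} \<subseteq> comb_trie k\<close>] trie_comb_trie
    by (simp add: trie_def)
qed

lemma comb_leaf_is_leaf:
  assumes "i \<le> k"
  shows "is_leaf (comb_trie k) (comb_leaf k i)"
  unfolding comb_trie_def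
proof (rule is_leaf_prefix_closure)
  show "comb_leaf k i \<in> comb_leaf k ` {..k}" using assms by simp
  fix w assume "w \<in> comb_leaf k ` {..k}"
  then obtain j where w_eq: "w = (replicate k 0 @ replicate j 1) @ [2]" by (auto simp: comb_leaf_def)
  have "2 \<in> set (comb_leaf k i)" "2 \<notin> set (replicate k 0 @ replicate j (1::nat))"
    by (auto simp: comb_leaf_def)
  then have "\<not> prefix (comb_leaf k i) (replicate k 0 @ replicate j 1)"
    using set_mono_prefix by blast
  then show "\<not> strict_prefix (comb_leaf k i) w"
    unfolding w_eq strict_prefix_def prefix_snoc by blast
qed

definition comb_left_maximal :: "nat \<Rightarrow> nat list set" where
  "comb_left_maximal k = (\<lambda>(j, i). rev (replicate j 0 @ replicate i 1 @ [2])) ` ({..k} \<times> {..k})"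

lemma card_comb_left_maximal: "card (comb_left_maximal k) = (k + 1) ^ 2"
proof -
  have "inj_on (\<lambda>(j, i). rev (replicate j 0 @ replicate i 1 @ [2::nat])) ({..k} \<times> {..k})"
  proof (rule inj_onI)
    fix p q assume "(\<lambda>(j, i). rev (replicate j 0 @ replicate i 1 @ [2::nat])) p
      = (\<lambda>(j, i). rev (replicate j 0 @ replicate i 1 @ [2::nat])) q"
    moreover obtain j i j' i' where "p = (j, i)" "q = (j', i')" by fastforce
    ultimately have w: "rev (replicate j 0 @ replicate i 1 @ [2])
      = rev (replicate j' 0 @ replicate i' 1 @ [2::nat])"
      by (simp only: prod.case)
    have "j = j'" using arg_cong[where f = "\<lambda>w. count_list w 0", OF w]
      by (simp add: count_list_replicate)
    moreover have "i = i'" using arg_cong[where f = "\<lambda>w. count_list w 1", OF w]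
      by (simp add: count_list_replicate)
    ultimately show "p = q" using \<open>p = (j, i)\<close> \<open>q = (j', i')\<close> by simp
  qed
  then show ?thesis by (simp add: comb_left_maximal_def card_image power2_eq_square)
qed

lemma comb_left_maximal_left_maximal:
  "comb_left_maximal k \<subseteq> {Y. left_maximal_b (comb_trie k) Y}"
proof
  fix Y assume "Y \<in> comb_left_maximal k"
  then obtain j i where ji: "j \<le> k" "i \<le> k" "Y = rev (replicate j 0 @ replicate i 1 @ [2])"
    unfolding comb_left_maximal_def by auto
  then have "comb_leaf k i = replicate (k - j) 0 @ (replicate j 0 @ replicate i 1 @ [2])"
    by (simp add: comb_leaf_def replicate_add[symmetric])
  with comb_leaf_is_leaf[OF ji(2)]
  have "is_leaf (comb_trie k) (replicate (k - j) 0 @ (replicate j 0 @ replicate i 1 @ [2]))"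
    by simp
  then show "Y \<in> {Y. left_maximal_b (comb_trie k) Y}"
    using left_maximal_b_leaf_suffix ji(3) by blast
qed

lemma comb_dawg_lower_bound:
  "real (card (comb_trie k))^2 / 9 \<le> real (card (dawg_nodes (comb_trie k))) \<and>
   real (card (comb_trie k))^2 / 9 \<le> real (card (dawg_edges (comb_trie k)))"
proof -
  have "real (card (comb_trie k)) \<le> 3 * real (k + 1)"
    using card_comb_trie_le[of k] by (metis of_nat_le_iff of_nat_mult of_nat_numeral)
  then have "real (card (comb_trie k))^2 \<le> (3 * real (k + 1))^2"
    by (rule power_mono) simp
  also have "\<dots> = 9 * real (card (comb_left_maximal k))"
    by (simp add: card_comb_left_maximal power2_eq_square algebra_simps)
  finally have "real (card (comb_trie k))^2 / 9 \<le> real (card (comb_left_maximal k))"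
    by simp
  moreover have "card (comb_left_maximal k) \<le> card (dawg_nodes (comb_trie k))"
    by (rule card_left_maximal_le_dawg_nodes[OF trie_comb_trie comb_left_maximal_left_maximal])
  moreover have "card (comb_left_maximal k) \<le> card (dawg_edges (comb_trie k))"
    by (rule card_left_maximal_le_dawg_edges[OF trie_comb_trie comb_left_maximal_left_maximal])
      (auto simp: comb_left_maximal_def)
  ultimately show ?thesis by (meson of_nat_le_iff order_trans)
qed

theorem theorem5:
  shows "(\<exists>C::nat. \<forall>T. trie T \<longrightarrow>
            card (dawg_nodes T) \<le> C * (card T)^2 \<and> card (dawg_edges T) \<le> C * (card T)^2)
       \<and> (\<exists>\<Sigma>::nat set. finite \<Sigma> \<and> (\<exists>c::real. c > 0 \<and> (\<forall>N. \<exists>T.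
            trie T \<and> (\<forall>w\<in>T. set w \<subseteq> \<Sigma>) \<and> card T \<ge> N \<and>
            real (card (dawg_nodes T)) \<ge> c * real (card T)^2 \<and>
            real (card (dawg_edges T)) \<ge> c * real (card T)^2)))"
proof (intro conjI exI allI impI)
  fix T assume T: "trie T"
  show "card (dawg_nodes T) \<le> 1 * (card T)^2" "card (dawg_edges T) \<le> 1 * (card T)^2"
    using card_dawg_nodes_le_Substr_b[OF T] card_dawg_edges_le_Substr_b[OF T]
      card_Substr_b_le[OF T] by simp_all
next
  fix N
  show "finite {0, 1, 2::nat}" "(0::real) < 1 / 9" by simp_all
  show "trie (comb_trie N)" "\<forall>w\<in>comb_trie N. set w \<subseteq> {0, 1, 2}" "N \<le> card (comb_trie N)"
    using trie_comb_trie comb_trie_alphabet card_comb_trie_ge[of N] by auto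
  show "1 / 9 * real (card (comb_trie N))^2 \<le> real (card (dawg_nodes (comb_trie N)))"
       "1 / 9 * real (card (comb_trie N))^2 \<le> real (card (dawg_edges (comb_trie N)))"
    using comb_dawg_lower_bound[of N] by simp_all
qed

end
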